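(* Let $G$ be a ribbon graph and $e\in E(G)$. Then (1) $P_{\langle\delta\rangle}(G,x)=P_{\langle\delta\rangle}(G\setminus e,x)+P_{\langle\delta\rangle}(G/e,x)$; (2) $P_{\langle\tau\delta\tau\rangle}(G,x)=P_{\langle\tau\delta\tau\rangle}(G\setminus e,x)+P_{\langle\tau\delta\tau\rangle}(G^{\tau(e)}/e,x)$; (3) $P_{\langle\delta\tau\rangle}(G,x)=P_{\langle\delta\tau\rangle}(G\setminus e,x)+P_{\langle\delta\tau\rangle}(G/e,x)+P_{\langle\delta\tau\rangle}(G^{\tau(e)}/e,x)$; (4) $P_{\langle\delta,\tau\rangle}(G,x)=2\big[P_{\langle\delta,\tau\rangle}(G\setminus e,x)+P_{\langle\delta,\tau\rangle}(G/e,x)+P_{\langle\delta,\tau\rangle}(G^{\tau(e)}/e,x)\big]$.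
   Context: A ribbon graph $G=(V(G),E(G))$ is a (orientable or non-orientable) surface with boundary, represented as the union of a set $V(G)$ of vertex discs and a set $E(G)$ of edge discs (ribbons) such that vertices and edges intersect in disjoint line segments, each such segment lies on the boundary of exactly one vertex and exactly one edge, and every edge contains exactly two such segments. $v(G)$, $e(G)$ denote the numbers of vertices and edges. For $A\subseteq E(G)$, $G\setminus A$ is obtained by deleting the edges in $A$ while keeping all vertices. The partial dual $G^{\delta(A)}$ is obtained by gluing a disc along each boundary component of the spanning ribbon subgraph $(V(G),A)$ (these discs become the vertex discs), removing the interiors of the original vertex discs, and keeping the edge ribbons. The partial Petrial $G^{\tau(A)}$ adds a half-twist to each edge in $A$. Contraction: $G/e=G^{\delta(e)}\setminus e$. For a word $w=w_1\cdots w_n$ over $\{\delta,\tau\}$, $G^{w(A)}=(\cdots(G^{w_n(A)})^{w_{n-1}(A)}\cdots)^{w_1(A)}$ (rightmost letter applied first), $G^{1(A)}=G$, and $G^{\xi(A)\pi(B)}=(G^{\xi(A)})^{\pi(B)}$. Vertex polynomials (sums over ordered partitions of $E(G)$ into pairwise disjoint, possibly empty parts): $P_{\langle\delta\rangle}(G,x)=\sum_{A\subseteq E(G)}x^{v(G^{\delta(A)})}$; $P_{\langle\tau\delta\tau\rangle}(G,x)=\sum_{A\subseteq E(G)}x^{v(G^{\tau\delta\tau(A)})}$; $P_{\langle\delta\tau\rangle}(G,x)=\sum_{(A_1,A_2,A_3)}x^{v(G^{1(A_1)\tau\delta(A_2)\delta\tau(A_3)})}$; $P_{\langle\delta,\tau\rangle}(G,x)=\sum_{(A_1,\dots,A_6)}x^{v(G^{1(A_1)\delta(A_2)\tau(A_3)\tau\delta(A_4)\delta\tau(A_5)\tau\delta\tau(A_6)})}$.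 *)

theory Defs
  imports "HOL-Computational_Algebra.Polynomial" "HOL-Library.FuncSet"
begin

(* Combinatorial model of (possibly non-orientable) ribbon graphs via
   graph-encoded maps (gems / flags).  Each edge e carries four flags
   (e, i, s): i = which end of the ribbon, s = which side.  The three
   involutions of the gem are
     alpha (e,i,s) = (e, \<not>i, s)   (other end, same side)   -- fixed
     beta  (e,i,s) = (e, i, \<not>s)   (same end, other side)   -- fixed
     gam                              (corner at a vertex)     -- the data
   Vertices incident to edges are the orbits of <beta, gam>; isolated
   vertices (which carry no flags) are counted separately by riso. *)

type_synonym 'e flag = "'e \<times> bool \<times> bool"

record 'e rgraph =
  redges :: "'e set"
  rgam   :: "'e flag \<Rightarrow> 'e flag"
  riso   :: nat

definition eflags :: "'e set \<Rightarrow> 'e flag set" where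
  "eflags A = A \<times> (UNIV :: (bool \<times> bool) set)"

definition fl_alpha :: "'e flag \<Rightarrow> 'e flag" where
  "fl_alpha = (\<lambda>(e,i,s). (e, \<not> i, s))"

definition fl_beta :: "'e flag \<Rightarrow> 'e flag" where
  "fl_beta = (\<lambda>(e,i,s). (e, i, \<not> s))"

definition ribbon_graph :: "'e rgraph \<Rightarrow> bool" where
  "ribbon_graph G \<longleftrightarrow> finite (redges G) \<and>
     (\<forall>f \<in> eflags (redges G). rgam G f \<in> eflags (redges G)
        \<and> rgam G (rgam G f) = f \<and> rgam G f \<noteq> f)"

definition vrel :: "'e rgraph \<Rightarrow> ('e flag \<times> 'e flag) set" where
  "vrel G = {(f, fl_beta f) | f. f \<in> eflags (redges G)}
          \<union> {(f, rgam G f) | f. f \<in> eflags (redges G)}"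

definition vcount :: "'e rgraph \<Rightarrow> nat" where
  "vcount G = card (eflags (redges G) // (vrel G)\<^sup>*) + riso G"

(* partial Petrial G^{tau(A)}: on edges of A, alpha becomes alpha o beta;
   relabelling the sides at end True of those edges restores the standard
   alpha, beta and conjugates gam. *)
definition tw_map :: "'e set \<Rightarrow> 'e flag \<Rightarrow> 'e flag" where
  "tw_map A = (\<lambda>(e,i,s). if e \<in> A \<and> i then (e, i, \<not> s) else (e, i, s))"

definition ppetrial :: "'e set \<Rightarrow> 'e rgraph \<Rightarrow> 'e rgraph" where
  "ppetrial A G = G\<lparr>rgam := tw_map A \<circ> rgam G \<circ> tw_map A\<rparr>"

(* partial dual G^{delta(A)}: on edges of A, alpha and beta are swapped;
   relabelling (e,i,s) -> (e,s,i) on those edges restores standard alpha,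
   beta and conjugates gam. *)
definition dl_map :: "'e set \<Rightarrow> 'e flag \<Rightarrow> 'e flag" where
  "dl_map A = (\<lambda>(e,i,s). if e \<in> A then (e, s, i) else (e, i, s))"

definition pdual :: "'e set \<Rightarrow> 'e rgraph \<Rightarrow> 'e rgraph" where
  "pdual A G = G\<lparr>rgam := dl_map A \<circ> rgam G \<circ> dl_map A\<rparr>"

(* deletion G \ e: remove the four flags of e; the corner map skips over
   the ends of e; vertices all of whose flags belong to e become isolated. *)
definition del_edge :: "'e \<Rightarrow> 'e rgraph \<Rightarrow> 'e rgraph" where
  "del_edge e G = G\<lparr>redges := redges G - {e},
     rgam := (\<lambda>f. let k = (LEAST k. ((rgam G \<circ> fl_beta) ^^ k) (rgam G f) \<notin> eflags {e})
                 in ((rgam G \<circ> fl_beta) ^^ k) (rgam G f)),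
     riso := riso G + card {C \<in> eflags (redges G) // (vrel G)\<^sup>*. C \<subseteq> eflags {e}}\<rparr>"

definition contract :: "'e \<Rightarrow> 'e rgraph \<Rightarrow> 'e rgraph" where
  "contract e G = del_edge e (pdual {e} G)"

(* words: rightmost letter is applied first *)
definition op_td :: "'e set \<Rightarrow> 'e rgraph \<Rightarrow> 'e rgraph" where
  "op_td A G = ppetrial A (pdual A G)"

definition op_dt :: "'e set \<Rightarrow> 'e rgraph \<Rightarrow> 'e rgraph" where
  "op_dt A G = pdual A (ppetrial A G)"

definition op_tdt :: "'e set \<Rightarrow> 'e rgraph \<Rightarrow> 'e rgraph" where
  "op_tdt A G = ppetrial A (pdual A (ppetrial A G))"

(* ordered partitions (A_0,...,A_{k-1}) of E encoded by c \<in> E \<rightarrow>\<^sub>E {..<k},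
   A_i = blk E c i *)
definition blk :: "'e set \<Rightarrow> ('e \<Rightarrow> nat) \<Rightarrow> nat \<Rightarrow> 'e set" where
  "blk E c i = {e \<in> E. c e = i}"

definition P_d :: "'e rgraph \<Rightarrow> int poly" where
  "P_d G = (\<Sum>A \<in> Pow (redges G). monom 1 (vcount (pdual A G)))"

definition P_tdt :: "'e rgraph \<Rightarrow> int poly" where
  "P_tdt G = (\<Sum>A \<in> Pow (redges G). monom 1 (vcount (op_tdt A G)))"

(* G^{1(A1) tau delta(A2) delta tau(A3)} *)
definition P_dt :: "'e rgraph \<Rightarrow> int poly" where
  "P_dt G = (\<Sum>c \<in> redges G \<rightarrow>\<^sub>E {..<3}.
     monom 1 (vcount (op_dt (blk (redges G) c 2) (op_td (blk (redges G) c 1) G))))"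

(* G^{1(A1) delta(A2) tau(A3) tau delta(A4) delta tau(A5) tau delta tau(A6)} *)
definition P_all :: "'e rgraph \<Rightarrow> int poly" where
  "P_all G = (\<Sum>c \<in> redges G \<rightarrow>\<^sub>E {..<6}.
     monom 1 (vcount
       (op_tdt (blk (redges G) c 5)
        (op_dt (blk (redges G) c 4)
         (op_td (blk (redges G) c 3)
          (ppetrial (blk (redges G) c 2)
           (pdual (blk (redges G) c 1) G)))))))"

end

theory Submission
  imports Defs
begin

text \<open>
  Every operation occurring in the four polynomials conjugates the corner involution \<open>rgam\<close>
  by a relabelling of flags that acts edge by edge. Hence operations on disjoint sets of edges
  commute, operations avoiding \<open>e\<close> commute with deleting \<open>e\<close>, and in each summand the operation
  applied at \<open>e\<close> can be moved outside all the others. A partial Petrial does not change the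
  vertices, and deleting an edge does not change their number: the corner map of \<open>G \<setminus> e\<close> sends
  a flag to the first flag off \<open>e\<close> along the vertex rotation \<open>rgam G \<circ> fl_beta\<close>, so the vertex
  classes of \<open>G \<setminus> e\<close> are those of \<open>G\<close> cut down to the flags off \<open>e\<close>, while the classes
  consisting of flags of \<open>e\<close> alone are kept as isolated vertices. Therefore a summand that applies
  \<open>1\<close> or \<open>\<tau>\<close> at \<open>e\<close> is a summand for \<open>G \<setminus> e\<close>, one that applies \<open>\<delta>\<close> or \<open>\<tau>\<delta>\<close> is a summand for
  \<open>G / e\<close>, and one that applies \<open>\<delta>\<tau>\<close> or \<open>\<tau>\<delta>\<tau>\<close> is a summand for \<open>G\<^bsup>\<tau>(e)\<^esup> / e\<close>. The words
  admitted at \<open>e\<close> are \<open>1, \<delta>\<close> in \<open>P_d\<close>, \<open>1, \<tau>\<delta>\<tau>\<close> in \<open>P_tdt\<close>, \<open>1, \<tau>\<delta>, \<delta>\<tau>\<close> in \<open>P_dt\<close>,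
  and all six in \<open>P_all\<close>, which accounts for the factor 2.
\<close>

lemma mem_eflags_iff: "f \<in> eflags A \<longleftrightarrow> fst f \<in> A"
  by (cases f) (auto simp: eflags_def)

lemma eflags_Diff: "eflags (A - B) = eflags A - eflags B"
  by (auto simp: eflags_def)

lemma finite_eflags: "finite A \<Longrightarrow> finite (eflags A)"
  by (simp add: eflags_def)

lemma fst_fl_beta [simp]: "fst (fl_beta f) = fst f"
  by (cases f) (simp add: fl_beta_def)

lemma fl_beta_fl_beta [simp]: "fl_beta (fl_beta f) = f"
  by (cases f) (simp add: fl_beta_def)

lemma fl_beta_in_eflags_iff [simp]: "fl_beta f \<in> eflags A \<longleftrightarrow> f \<in> eflags A"
  by (simp add: mem_eflags_iff)

lemma funpow_closed: "(\<And>x. x \<in> F \<Longrightarrow> r x \<in> F) \<Longrightarrow> w \<in> F \<Longrightarrow> (r ^^ n) w \<in> F"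
  by (induction n) auto

lemma funpow_inj_on_finite:
  assumes "finite F" and "inj_on r F" and closed: "\<And>x. x \<in> F \<Longrightarrow> r x \<in> F" and "w \<in> F"
  obtains p where "p > 0" and "(r ^^ p) w = w"
proof -
  have "bij_betw r F F"
    using assms endo_inj_surj[of F r] by (auto simp: bij_betw_def)
  then have inj_pow: "inj_on (r ^^ n) F" for n
    using bij_betw_funpow bij_betw_imp_inj_on by blast
  have "(\<lambda>n. (r ^^ n) w) ` {..card F} \<subseteq> F"
    using funpow_closed[OF closed \<open>w \<in> F\<close>] by auto
  then have "\<not> inj_on (\<lambda>n. (r ^^ n) w) {..card F}"
    using card_inj_on_le[OF _ _ \<open>finite F\<close>] by fastforce
  then obtain i j where "i < j" and ij: "(r ^^ i) w = (r ^^ j) w"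
    unfolding inj_on_def by (metis linorder_neqE_nat)
  have "(r ^^ i) ((r ^^ (j - i)) w) = (r ^^ i) w"
    using ij \<open>i < j\<close> by (simp flip: funpow_add comp_apply[of "r ^^ i"])
  then have "(r ^^ (j - i)) w = w"
    using inj_pow[of i] funpow_closed[OF closed \<open>w \<in> F\<close>] \<open>w \<in> F\<close> by (meson inj_onD)
  then show thesis
    using \<open>i < j\<close> by (intro that[of "j - i"]) auto
qed

definition first_exit :: "('a \<Rightarrow> 'a) \<Rightarrow> 'a set \<Rightarrow> 'a \<Rightarrow> 'a" where
  "first_exit p S y = (p ^^ (LEAST k. (p ^^ k) y \<notin> S)) y"

lemma first_exit_notin: "(p ^^ k) y \<notin> S \<Longrightarrow> first_exit p S y \<notin> S"
  unfolding first_exit_def by (rule LeastI)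

lemma first_exit_le:
  assumes "(p ^^ m) y \<notin> S" obtains k where "k \<le> m" and "first_exit p S y = (p ^^ k) y"
proof -
  have "(LEAST k. (p ^^ k) y \<notin> S) \<le> m"
    by (rule Least_le) (rule assms)
  then show thesis
    using that unfolding first_exit_def by blast
qed

lemma first_exit_closed:
  "(\<And>x. x \<in> F \<Longrightarrow> p x \<in> F) \<Longrightarrow> y \<in> F \<Longrightarrow> first_exit p S y \<in> F"
  unfolding first_exit_def by (rule funpow_closed)

lemma Least_cong_below:
  assumes agree: "\<And>k. \<forall>j<k. \<not> P j \<Longrightarrow> Q k \<longleftrightarrow> P k"
  shows "(LEAST k. Q k) = (LEAST k :: nat. P k)"
proof (cases "\<exists>k. P k")
  case True
  let ?k = "LEAST k. P k"
  have below: "\<forall>j<?k. \<not> P j"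
    by (intro allI impI not_less_Least)
  show ?thesis
  proof (rule Least_equality)
    show "Q ?k"
      using agree[OF below] LeastI_ex[OF True] by simp
  next
    fix j assume "Q j"
    show "?k \<le> j"
    proof (rule leI, rule notI)
      assume j: "j < ?k"
      have "\<forall>i<j. \<not> P i"
      proof (intro allI impI)
        fix i assume "i < j"
        then show "\<not> P i"
          using j by (intro not_less_Least) (rule less_trans)
      qed
      then have "Q j \<longleftrightarrow> P j"
        by (rule agree)
      moreover have "\<not> P j"
        using j by (rule not_less_Least)
      ultimately show False
        using \<open>Q j\<close> by blast
    qed
  qed
next
  case False
  then have "Q k \<longleftrightarrow> P k" for k
    using agree[of k] by simp
  then show ?thesis
    by simp
qed

lemma first_exit_conj:
  assumes S: "\<And>x. m x \<in> S \<longleftrightarrow> x \<in> S" and comm: "\<And>x. x \<in> S \<Longrightarrow> q (m x) = m (p x)"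
  shows "first_exit q S (m y) = m (first_exit p S y)"
proof -
  have agree: "(q ^^ k) (m y) = m ((p ^^ k) y)" if "\<forall>j<k. (p ^^ j) y \<in> S" for k
    using that
  proof (induction k)
    case (Suc k)
    then have "(q ^^ k) (m y) = m ((p ^^ k) y)" and "(p ^^ k) y \<in> S"
      by simp_all
    then show ?case
      by (simp add: comm)
  qed simp
  have "(LEAST k. (q ^^ k) (m y) \<notin> S) = (LEAST k. (p ^^ k) y \<notin> S)"
    by (rule Least_cong_below) (simp add: agree S)
  moreover have "\<forall>j<(LEAST k. (p ^^ k) y \<notin> S). (p ^^ j) y \<in> S"
    using not_less_Least by blast
  ultimately show ?thesis
    unfolding first_exit_def using agree by simp
qed

lemma rtrancl_Image_eq_if_sym:
  assumes "sym R" and "y \<in> R\<^sup>* `` {x}"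
  shows "R\<^sup>* `` {y} = R\<^sup>* `` {x}"
proof -
  have "(y, x) \<in> R\<^sup>*"
    using assms sym_rtrancl[OF \<open>sym R\<close>] by (auto dest: symD)
  then show ?thesis
    using assms(2) by (auto intro: rtrancl_trans)
qed

lemma rtrancl_map_prod_image:
  assumes "bij h" shows "(map_prod h h ` R)\<^sup>* = map_prod h h ` R\<^sup>*"
proof
  have "(h a, h b) \<in> (map_prod h h ` R)\<^sup>*" if "(a, b) \<in> R\<^sup>*" for a b
    using that
  proof induction
    case (step y z)
    have "(h y, h z) \<in> map_prod h h ` R"
      using step.hyps(2) by force
    with step.IH show ?case
      by (rule rtrancl_into_rtrancl)
  qed simp
  then show "map_prod h h ` R\<^sup>* \<subseteq> (map_prod h h ` R)\<^sup>*"
    by auto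
next
  show "(map_prod h h ` R)\<^sup>* \<subseteq> map_prod h h ` R\<^sup>*"
  proof (rule subrelI)
    fix u v assume "(u, v) \<in> (map_prod h h ` R)\<^sup>*"
    then have "(inv h u, inv h v) \<in> R\<^sup>*"
    proof induction
      case (step y z)
      then obtain a b where "(a, b) \<in> R" and "y = h a" and "z = h b"
        by auto
      then show ?case
        using step.IH bij_is_inj[OF assms] by (simp add: rtrancl_into_rtrancl)
    qed simp
    then show "(u, v) \<in> map_prod h h ` R\<^sup>*"
      using bij_inv_eq_iff[OF assms] by (metis map_prod_simp rev_image_eqI)
  qed
qed

lemma card_quotient_map_prod_image:
  assumes "bij h" shows "card ((h ` A) // (map_prod h h ` R)\<^sup>*) = card (A // R\<^sup>*)"
proof -
  have "(map_prod h h ` R\<^sup>*) `` {h x} = h ` (R\<^sup>* `` {x})" for x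
    using bij_is_inj[OF assms] by (auto simp: inj_eq)
  then have "(h ` A) // (map_prod h h ` R)\<^sup>* = image h ` (A // R\<^sup>*)"
    unfolding rtrancl_map_prod_image[OF assms] quotient_def by auto
  moreover have "inj_on (image h) (A // R\<^sup>*)"
    using bij_is_inj[OF assms] by (simp add: inj_on_image inj_on_subset)
  ultimately show ?thesis
    by (simp add: card_image)
qed

lemma rtrancl_Image_local_cong:
  assumes closed: "R `` S \<subseteq> S" and "x \<in> S" and agree: "\<And>f. f \<in> S \<Longrightarrow> R' `` {f} = R `` {f}"
  shows "R'\<^sup>* `` {x} = R\<^sup>* `` {x}"
proof -
  have reach: "(x, y) \<in> U\<^sup>* \<and> y \<in> S"
    if "(x, y) \<in> T\<^sup>*" and "\<And>f. f \<in> S \<Longrightarrow> T `` {f} = U `` {f}" and "T `` S \<subseteq> S" for T U y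
    using that(1)
  proof induction
    case (step y z)
    then have "(y, z) \<in> U" and "z \<in> S"
      using that(2,3) by blast+
    with step show ?case
      by (blast intro: rtrancl_into_rtrancl)
  qed (simp add: \<open>x \<in> S\<close>)
  have "R' `` S \<subseteq> S"
    using closed agree by blast
  then show ?thesis
    using reach[of _ R' R] reach[of _ R R'] closed agree by blast
qed

section \<open>Vertices as orbits of the rotation\<close>

lemma vrel_iff: "(x, y) \<in> vrel G \<longleftrightarrow> x \<in> eflags (redges G) \<and> (y = fl_beta x \<or> y = rgam G x)"
  unfolding vrel_def by blast

lemma vrel_Image_singleton:
  "vrel G `` {f} = (if f \<in> eflags (redges G) then {fl_beta f, rgam G f} else {})"
  by (auto simp: vrel_iff)

locale ribbon =
  fixes G :: "'a rgraph"
  assumes ribbon_graph: "ribbon_graph G"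
begin

abbreviation flags :: "'a flag set" where "flags \<equiv> eflags (redges G)"
abbreviation gam :: "'a flag \<Rightarrow> 'a flag" where "gam \<equiv> rgam G"

definition rot :: "'a flag \<Rightarrow> 'a flag" where "rot = gam \<circ> fl_beta"

lemma rot_apply: "rot f = gam (fl_beta f)"
  by (simp add: rot_def)

lemma finite_flags: "finite flags"
  using ribbon_graph by (simp add: ribbon_graph_def finite_eflags)

lemma gam_closed: "f \<in> flags \<Longrightarrow> gam f \<in> flags"
  using ribbon_graph by (simp add: ribbon_graph_def)

lemma gam_gam: "f \<in> flags \<Longrightarrow> gam (gam f) = f"
  using ribbon_graph by (simp add: ribbon_graph_def)

lemma rot_closed: "f \<in> flags \<Longrightarrow> rot f \<in> flags"
  by (simp add: gam_closed rot_apply)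

lemma rot_pow_closed: "f \<in> flags \<Longrightarrow> (rot ^^ n) f \<in> flags"
  by (rule funpow_closed[OF rot_closed])

lemma inj_on_rot: "inj_on rot flags"
proof (rule inj_onI)
  fix x y assume "x \<in> flags" "y \<in> flags" "rot x = rot y"
  then have "gam (gam (fl_beta x)) = gam (gam (fl_beta y))"
    by (simp add: rot_apply)
  then show "x = y"
    using \<open>x \<in> flags\<close> \<open>y \<in> flags\<close> gam_gam by (metis fl_beta_fl_beta fl_beta_in_eflags_iff)
qed

lemma rot_periodic:
  assumes "f \<in> flags" obtains p where "p > 0" and "(rot ^^ p) f = f"
  using funpow_inj_on_finite[OF finite_flags inj_on_rot rot_closed assms] by blast

lemma rot_pow_beta_rot_pow: "f \<in> flags \<Longrightarrow> (rot ^^ n) (fl_beta ((rot ^^ n) f)) = fl_beta f"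
proof (induction n arbitrary: f)
  case (Suc n)
  have "(rot ^^ Suc n) (fl_beta ((rot ^^ Suc n) f))
      = rot ((rot ^^ n) (fl_beta ((rot ^^ n) (rot f))))"
    by (simp add: funpow_swap1)
  also have "\<dots> = rot (fl_beta (rot f))"
    using Suc rot_closed by simp
  also have "\<dots> = fl_beta f"
    using Suc.prems gam_gam by (simp add: rot_apply)
  finally show ?case .
qed simp

text \<open>Since \<open>rot\<close> is periodic on the flags, its inverse is a power of it, so the vertex class of
  a flag consists of two \<open>rot\<close>-orbits, one for each side.\<close>

lemma beta_rot_pow:
  assumes "f \<in> flags" obtains j where "fl_beta ((rot ^^ n) f) = (rot ^^ j) (fl_beta f)"
proof -
  let ?w = "fl_beta ((rot ^^ n) f)"
  have "?w \<in> flags"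
    using rot_pow_closed[OF assms] by simp
  then obtain p where "p > 0" and p: "(rot ^^ p) ?w = ?w"
    using rot_periodic by blast
  have "(rot ^^ (p * k)) ?w = ?w" for k
    by (induction k) (simp_all add: funpow_add p)
  then have "?w = (rot ^^ (p * n - n + n)) ?w"
    using \<open>p > 0\<close> by simp
  also have "\<dots> = (rot ^^ (p * n - n)) (fl_beta f)"
    using rot_pow_beta_rot_pow[OF assms] by (simp add: funpow_add)
  finally show thesis
    by (rule that)
qed

lemma gam_rot_pow:
  assumes "f \<in> flags" obtains j where "gam ((rot ^^ n) f) = (rot ^^ j) (fl_beta f)"
proof (cases n)
  case 0
  then show thesis
    using that[of 1] by (simp add: rot_apply)
next
  case (Suc m)
  then have "gam ((rot ^^ n) f) = fl_beta ((rot ^^ m) f)"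
    using gam_gam rot_pow_closed[OF assms] by (simp add: rot_apply)
  moreover obtain j where "fl_beta ((rot ^^ m) f) = (rot ^^ j) (fl_beta f)"
    using beta_rot_pow[OF assms] .
  ultimately show thesis
    using that by simp
qed

lemma rot_pow_in_vertex_class: "f \<in> flags \<Longrightarrow> (f, (rot ^^ n) f) \<in> (vrel G)\<^sup>*"
proof (induction n)
  case (Suc n)
  have "((rot ^^ n) f, fl_beta ((rot ^^ n) f)) \<in> vrel G"
    and "(fl_beta ((rot ^^ n) f), (rot ^^ Suc n) f) \<in> vrel G"
    using rot_pow_closed[OF Suc.prems] by (auto simp: vrel_iff rot_apply)
  then show ?case
    using Suc by (meson rtrancl.rtrancl_into_rtrancl)
qed simp

lemma vertex_class_eq_rot_orbits:
  assumes x: "x \<in> flags"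
  shows "(vrel G)\<^sup>* `` {x} = range (\<lambda>n. (rot ^^ n) x) \<union> range (\<lambda>n. (rot ^^ n) (fl_beta x))"
    (is "_ = ?orbits")
proof
  have step_closed: "fl_beta ((rot ^^ n) u) \<in> ?orbits \<and> gam ((rot ^^ n) u) \<in> ?orbits"
    if "u = x \<or> u = fl_beta x" for u n
  proof -
    have u: "u \<in> flags"
      using that x by auto
    obtain i where "fl_beta ((rot ^^ n) u) = (rot ^^ i) (fl_beta u)"
      using beta_rot_pow[OF u] .
    moreover obtain j where "gam ((rot ^^ n) u) = (rot ^^ j) (fl_beta u)"
      using gam_rot_pow[OF u] .
    moreover have "(rot ^^ k) (fl_beta u) \<in> ?orbits" for k
      using that by (elim disjE) simp_all
    ultimately show ?thesis
      by simp
  qed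
  show "(vrel G)\<^sup>* `` {x} \<subseteq> ?orbits"
  proof
    fix y assume "y \<in> (vrel G)\<^sup>* `` {x}"
    then have "(x, y) \<in> (vrel G)\<^sup>*" by simp
    then show "y \<in> ?orbits"
    proof (induction rule: rtrancl_induct)
      case base
      show ?case by (metis UnI1 funpow_0 rangeI)
    next
      case (step y z)
      obtain u n where "u = x \<or> u = fl_beta x" and "y = (rot ^^ n) u"
        using step.IH by blast
      moreover have "z = fl_beta y \<or> z = gam y"
        using step.hyps(2) by (simp add: vrel_iff)
      ultimately show ?case
        using step_closed by blast
    qed
  qed
next
  have "(x, fl_beta x) \<in> (vrel G)\<^sup>*"
    using x by (auto simp: vrel_iff)
  then have "(x, (rot ^^ n) (fl_beta x)) \<in> (vrel G)\<^sup>*" for n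
    using rot_pow_in_vertex_class[of "fl_beta x" n] x by (simp add: rtrancl_trans)
  then show "?orbits \<subseteq> (vrel G)\<^sup>* `` {x}"
    using rot_pow_in_vertex_class[OF x] by blast
qed

lemma vertex_class_subset:
  assumes "x \<in> flags" shows "(vrel G)\<^sup>* `` {x} \<subseteq> flags"
proof -
  have "(rot ^^ n) x \<in> flags" and "(rot ^^ n) (fl_beta x) \<in> flags" for n
    using assms by (simp_all add: rot_pow_closed)
  then show ?thesis
    unfolding vertex_class_eq_rot_orbits[OF assms] by blast
qed

lemma sym_vrel: "sym (vrel G)"
  by (auto simp: sym_def vrel_iff gam_gam gam_closed)

lemma same_vertex_class: "y \<in> (vrel G)\<^sup>* `` {x} \<Longrightarrow> (vrel G)\<^sup>* `` {y} = (vrel G)\<^sup>* `` {x}"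
  by (rule rtrancl_Image_eq_if_sym[OF sym_vrel])

end

section \<open>Deleting an edge\<close>

lemma rgam_del_edge:
  "rgam (del_edge e G) f = first_exit (rgam G \<circ> fl_beta) (eflags {e}) (rgam G f)"
  by (simp add: del_edge_def first_exit_def)


lemma redges_del_edge [simp]: "redges (del_edge e G) = redges G - {e}"
  by (simp add: del_edge_def)

locale ribbon_edge = ribbon +
  fixes e :: 'a
  assumes edge: "e \<in> redges G"
begin

abbreviation flags_e :: "'a flag set" where "flags_e \<equiv> eflags {e}"
abbreviation flags' :: "'a flag set" where "flags' \<equiv> eflags (redges G - {e})"
abbreviation gam' :: "'a flag \<Rightarrow> 'a flag" where "gam' \<equiv> rgam (del_edge e G)"

lemma flags'_eq: "flags' = flags - flags_e"
  by (rule eflags_Diff)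

lemma gam'_eq: "gam' f = first_exit rot flags_e (gam f)"
  by (simp add: rgam_del_edge rot_def)

lemma gam'_closed:
  assumes f: "f \<in> flags'" shows "gam' f \<in> flags'"
proof -
  have bf: "fl_beta f \<in> flags" "fl_beta f \<notin> flags_e"
    using f flags'_eq by auto
  then obtain p where "p > 0" and p: "(rot ^^ p) (fl_beta f) = fl_beta f"
    using rot_periodic by blast
  then obtain q where "p = Suc q"
    using gr0_conv_Suc by blast
  then have "(rot ^^ q) (gam f) = fl_beta f"
    using p by (simp add: funpow_swap1 rot_apply)
  then have "gam' f \<notin> flags_e"
    unfolding gam'_eq using bf(2) by (intro first_exit_notin[where k = q]) simp
  moreover have "gam' f \<in> flags"
    unfolding gam'_eq using f flags'_eq by (auto intro: first_exit_closed rot_closed gam_closed)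
  ultimately show ?thesis
    using flags'_eq by simp
qed

lemma vrel_del_edge_iff: "(x, y) \<in> vrel (del_edge e G) \<longleftrightarrow> x \<in> flags' \<and> (y = fl_beta x \<or> y = gam' x)"
  by (simp add: vrel_iff del_edge_def)

lemma vrel_del_edge_in_vertex_class:
  assumes "(x, y) \<in> vrel (del_edge e G)"
  shows "(x, y) \<in> (vrel G)\<^sup>*" and "y \<in> flags'"
proof -
  have x: "x \<in> flags'" and y: "y = fl_beta x \<or> y = gam' x"
    using assms by (auto simp: vrel_del_edge_iff)
  then have xF: "x \<in> flags"
    using flags'_eq by auto
  show "y \<in> flags'"
    using x y gam'_closed[OF x] by auto
  obtain k where "gam' x = (rot ^^ k) (gam x)"
    unfolding gam'_eq first_exit_def by blast
  moreover have "(x, gam x) \<in> vrel G" and "(x, fl_beta x) \<in> vrel G"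
    using xF by (simp_all add: vrel_iff)
  ultimately show "(x, y) \<in> (vrel G)\<^sup>*"
    using y rot_pow_in_vertex_class[OF gam_closed[OF xF], of k]
    by (auto intro: converse_rtrancl_into_rtrancl)
qed

lemma rot_pow_in_del_edge_vertex_class:
  "w \<in> flags' \<Longrightarrow> (rot ^^ n) w \<in> flags' \<Longrightarrow> (w, (rot ^^ n) w) \<in> (vrel (del_edge e G))\<^sup>*"
proof (induction n arbitrary: w rule: less_induct)
  case (less n)
  show ?case
  proof (cases n)
    case (Suc m)
    have "(rot ^^ m) (gam (fl_beta w)) = (rot ^^ n) w"
      using Suc by (simp add: funpow_swap1 rot_apply)
    then have "(rot ^^ m) (gam (fl_beta w)) \<notin> flags_e"
      using less.prems flags'_eq by simp
    then obtain k where "k \<le> m" and k: "gam' (fl_beta w) = (rot ^^ k) (gam (fl_beta w))"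
      unfolding gam'_eq by (rule first_exit_le)
    let ?w' = "gam' (fl_beta w)"
    have "fl_beta w \<in> flags'"
      using less.prems by simp
    then have "(w, fl_beta w) \<in> vrel (del_edge e G)" and "(fl_beta w, ?w') \<in> vrel (del_edge e G)"
      using less.prems by (auto simp: vrel_del_edge_iff)
    then have "(w, ?w') \<in> (vrel (del_edge e G))\<^sup>*"
      by (meson converse_rtrancl_into_rtrancl r_into_rtrancl)
    have "(rot ^^ (m - k)) ?w' = (rot ^^ (m - k + k)) (gam (fl_beta w))"
      by (simp add: k funpow_add)
    also have "\<dots> = (rot ^^ n) w"
      using \<open>k \<le> m\<close> \<open>(rot ^^ m) (gam (fl_beta w)) = (rot ^^ n) w\<close> by simp
    finally have "(rot ^^ (m - k)) ?w' = (rot ^^ n) w" .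
    moreover have "(?w', (rot ^^ (m - k)) ?w') \<in> (vrel (del_edge e G))\<^sup>*"
      using less.IH[of "m - k" ?w'] Suc gam'_closed[OF \<open>fl_beta w \<in> flags'\<close>] less.prems
        \<open>(rot ^^ (m - k)) ?w' = (rot ^^ n) w\<close> by simp
    ultimately show ?thesis
      using \<open>(w, ?w') \<in> (vrel (del_edge e G))\<^sup>*\<close> by (simp add: rtrancl_trans)
  qed simp
qed

lemma del_edge_vertex_class:
  assumes x: "x \<in> flags'"
  shows "(vrel (del_edge e G))\<^sup>* `` {x} = (vrel G)\<^sup>* `` {x} \<inter> flags'"
proof
  show "(vrel (del_edge e G))\<^sup>* `` {x} \<subseteq> (vrel G)\<^sup>* `` {x} \<inter> flags'"
  proof
    fix y assume "y \<in> (vrel (del_edge e G))\<^sup>* `` {x}"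
    then have "(x, y) \<in> (vrel (del_edge e G))\<^sup>*" by simp
    then have "(x, y) \<in> (vrel G)\<^sup>* \<and> y \<in> flags'"
    proof (induction rule: rtrancl_induct)
      case (step y z)
      then show ?case
        using vrel_del_edge_in_vertex_class[OF step.hyps(2)] by (blast intro: rtrancl_trans)
    qed (simp add: x)
    then show "y \<in> (vrel G)\<^sup>* `` {x} \<inter> flags'" by simp
  qed
next
  have "x \<in> flags" and bx: "fl_beta x \<in> flags'"
    using x flags'_eq by auto
  have "(x, fl_beta x) \<in> vrel (del_edge e G)"
    using x by (simp add: vrel_del_edge_iff)
  then have "(x, (rot ^^ n) (fl_beta x)) \<in> (vrel (del_edge e G))\<^sup>*"
    if "(rot ^^ n) (fl_beta x) \<in> flags'" for n
    using rot_pow_in_del_edge_vertex_class[OF bx that] by (rule converse_rtrancl_into_rtrancl)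
  then show "(vrel G)\<^sup>* `` {x} \<inter> flags' \<subseteq> (vrel (del_edge e G))\<^sup>* `` {x}"
    unfolding vertex_class_eq_rot_orbits[OF \<open>x \<in> flags\<close>]
    using rot_pow_in_del_edge_vertex_class[OF x] by auto
qed

lemma quotient_vertex_class_eq:
  "C \<in> flags // (vrel G)\<^sup>* \<Longrightarrow> y \<in> C \<Longrightarrow> C = (vrel G)\<^sup>* `` {y}"
  unfolding quotient_def using same_vertex_class by blast

lemma vertex_class_off_edge:
  assumes C: "C \<in> flags // (vrel G)\<^sup>*" and "\<not> C \<subseteq> flags_e"
  obtains y where "y \<in> flags'" and "C = (vrel G)\<^sup>* `` {y}"
proof -
  obtain y where "y \<in> C" and "y \<notin> flags_e"
    using \<open>\<not> C \<subseteq> flags_e\<close> by blast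
  moreover have "C \<subseteq> flags"
    using C vertex_class_subset by (auto simp: quotient_def)
  ultimately show thesis
    using that quotient_vertex_class_eq[OF C] flags'_eq by blast
qed

lemma inj_on_Int_flags':
  "inj_on (\<lambda>C. C \<inter> flags') {C \<in> flags // (vrel G)\<^sup>*. \<not> C \<subseteq> flags_e}"
proof (rule inj_onI)
  fix C D
  assume C: "C \<in> {C \<in> flags // (vrel G)\<^sup>*. \<not> C \<subseteq> flags_e}"
    and D: "D \<in> {C \<in> flags // (vrel G)\<^sup>*. \<not> C \<subseteq> flags_e}" and CD: "C \<inter> flags' = D \<inter> flags'"
  obtain y where "y \<in> flags'" and y: "C = (vrel G)\<^sup>* `` {y}"
    using vertex_class_off_edge C by blast
  then have "y \<in> D"
    using CD by blast
  then show "C = D"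
    using quotient_vertex_class_eq D y by blast
qed

lemma del_edge_vertex_classes:
  "(\<lambda>C. C \<inter> flags') ` {C \<in> flags // (vrel G)\<^sup>*. \<not> C \<subseteq> flags_e}
    = flags' // (vrel (del_edge e G))\<^sup>*"
proof
  show "(\<lambda>C. C \<inter> flags') ` {C \<in> flags // (vrel G)\<^sup>*. \<not> C \<subseteq> flags_e}
    \<subseteq> flags' // (vrel (del_edge e G))\<^sup>*"
  proof
    fix D assume "D \<in> (\<lambda>C. C \<inter> flags') ` {C \<in> flags // (vrel G)\<^sup>*. \<not> C \<subseteq> flags_e}"
    then obtain C where C: "C \<in> flags // (vrel G)\<^sup>*" "\<not> C \<subseteq> flags_e" and D: "D = C \<inter> flags'"
      by blast
    obtain y where y: "y \<in> flags'" and "C = (vrel G)\<^sup>* `` {y}"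
      using vertex_class_off_edge[OF C] .
    then have "D = (vrel (del_edge e G))\<^sup>* `` {y}"
      using D del_edge_vertex_class[OF y] by simp
    then show "D \<in> flags' // (vrel (del_edge e G))\<^sup>*"
      using quotientI[OF y] by simp
  qed
next
  show "flags' // (vrel (del_edge e G))\<^sup>*
    \<subseteq> (\<lambda>C. C \<inter> flags') ` {C \<in> flags // (vrel G)\<^sup>*. \<not> C \<subseteq> flags_e}"
  proof
    fix D assume "D \<in> flags' // (vrel (del_edge e G))\<^sup>*"
    then obtain y where y: "y \<in> flags'" and D: "D = (vrel (del_edge e G))\<^sup>* `` {y}"
      by (auto simp: quotient_def)
    then have "(vrel G)\<^sup>* `` {y} \<in> {C \<in> flags // (vrel G)\<^sup>*. \<not> C \<subseteq> flags_e}"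
      using flags'_eq by (auto simp: quotient_def)
    then show "D \<in> (\<lambda>C. C \<inter> flags') ` {C \<in> flags // (vrel G)\<^sup>*. \<not> C \<subseteq> flags_e}"
      using D del_edge_vertex_class[OF y] by blast
  qed
qed

lemma vcount_del_edge: "vcount (del_edge e G) = vcount G"
proof -
  let ?Q = "flags // (vrel G)\<^sup>*"
  have "finite ?Q"
    unfolding quotient_def using finite_flags by simp
  then have "card ?Q = card {C \<in> ?Q. \<not> C \<subseteq> flags_e} + card {C \<in> ?Q. C \<subseteq> flags_e}"
    by (subst card_Un_disjoint[symmetric]) (auto intro: arg_cong[where f = card])
  moreover have "card (flags' // (vrel (del_edge e G))\<^sup>*) = card {C \<in> ?Q. \<not> C \<subseteq> flags_e}"
    using card_image[OF inj_on_Int_flags'] del_edge_vertex_classes by simp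
  ultimately show ?thesis
    unfolding vcount_def by (simp add: del_edge_def)
qed

end

lemma vcount_del_edge:
  "ribbon_graph G \<Longrightarrow> e \<in> redges G \<Longrightarrow> vcount (del_edge e G) = vcount G"
  using ribbon_edge.vcount_del_edge[of G e]
  by (simp add: ribbon_edge_def ribbon_def ribbon_edge_axioms_def)

section \<open>Relabelling flags\<close>

definition flag_conj :: "('a flag \<Rightarrow> 'a flag) \<Rightarrow> 'a rgraph \<Rightarrow> 'a rgraph" where
  "flag_conj m G = G\<lparr>rgam := m \<circ> rgam G \<circ> m\<rparr>"

lemma flag_conj_simps [simp]:
  "redges (flag_conj m G) = redges G" "riso (flag_conj m G) = riso G"
  "rgam (flag_conj m G) = m \<circ> rgam G \<circ> m"
  by (simp_all add: flag_conj_def)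

lemma flag_conj_flag_conj: "(\<And>x. m (m x) = x) \<Longrightarrow> flag_conj m (flag_conj m G) = G"
  by (simp add: flag_conj_def comp_def)

lemma flag_conj_commute:
  "(\<And>x. a (b x) = b (a x)) \<Longrightarrow> flag_conj a (flag_conj b G) = flag_conj b (flag_conj a G)"
  by (simp add: flag_conj_def comp_def)

lemma flag_conj_comp:
  "(\<And>x. a (b x) = b (a x)) \<Longrightarrow> flag_conj a (flag_conj b G) = flag_conj (a \<circ> b) G"
  by (simp add: flag_conj_def comp_def)

lemma ribbon_graph_flag_conj:
  assumes inv: "\<And>x. m (m x) = x" and edge: "\<And>x. fst (m x) = fst x" and "ribbon_graph G"
  shows "ribbon_graph (flag_conj m G)"
proof -
  have "m x \<in> eflags A \<longleftrightarrow> x \<in> eflags A" for x A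
    by (simp add: mem_eflags_iff edge)
  then show ?thesis
    using assms(3) unfolding ribbon_graph_def by (simp add: inv) (metis inv)
qed

lemma vcount_flag_conj:
  assumes inv: "\<And>x. h (h x) = x" and edge: "\<And>x. fst (h x) = fst x"
    and beta: "\<And>x. h (fl_beta x) = fl_beta (h x)"
  shows "vcount (flag_conj h G) = vcount G"
proof -
  have "h x \<in> eflags A \<longleftrightarrow> x \<in> eflags A" for x A
    by (simp add: mem_eflags_iff edge)
  then have flags: "h ` eflags (redges G) = eflags (redges G)"
    by (metis inv image_eqI image_subset_iff subsetI subset_antisym)
  have conj_iff: "(x, y) \<in> vrel (flag_conj h G) \<longleftrightarrow> (h x, h y) \<in> vrel G" for x y
  proof -
    have "h y = fl_beta (h x) \<longleftrightarrow> y = fl_beta x"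
      using beta inv by metis
    moreover have "h y = rgam G (h x) \<longleftrightarrow> y = h (rgam G (h x))"
      using inv by metis
    ultimately show ?thesis
      by (simp add: vrel_iff mem_eflags_iff edge)
  qed
  have map_prod_image_iff: "(x, y) \<in> map_prod h h ` S \<longleftrightarrow> (h x, h y) \<in> S" for x y S
  proof
    assume "(h x, h y) \<in> S"
    then show "(x, y) \<in> map_prod h h ` S"
      by (rule rev_image_eqI) (simp add: inv)
  qed (auto simp: inv)
  have "vrel (flag_conj h G) = map_prod h h ` vrel G"
    by (rule set_eqI) (metis conj_iff map_prod_image_iff surj_pair)
  then show ?thesis
    unfolding vcount_def using card_quotient_map_prod_image[OF involuntory_imp_bij[OF inv]] flags
    by (metis flag_conj_simps(1,2))
qed

lemma edge_vertex_classes_flag_conj_subset: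
  assumes inv: "\<And>x. m (m x) = x" and fix_e: "\<And>f. f \<in> eflags {e} \<Longrightarrow> m f = f"
    and "e \<in> redges G"
  shows "{C \<in> eflags (redges G) // (vrel G)\<^sup>*. C \<subseteq> eflags {e}}
    \<subseteq> {C \<in> eflags (redges G) // (vrel (flag_conj m G))\<^sup>*. C \<subseteq> eflags {e}}"
proof
  fix C assume "C \<in> {C \<in> eflags (redges G) // (vrel G)\<^sup>*. C \<subseteq> eflags {e}}"
  then obtain x where x: "x \<in> eflags (redges G)" and C: "C = (vrel G)\<^sup>* `` {x}"
    and "C \<subseteq> eflags {e}"
    by (auto simp: quotient_def)
  have closed: "vrel G `` C \<subseteq> C"
    using C by (auto intro: rtrancl_into_rtrancl)
  have agree: "vrel (flag_conj m G) `` {f} = vrel G `` {f}" if "f \<in> C" for f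
  proof -
    have f: "f \<in> eflags {e}" "f \<in> eflags (redges G)"
      using that \<open>C \<subseteq> eflags {e}\<close> \<open>e \<in> redges G\<close> by (auto simp: mem_eflags_iff)
    then have "(f, rgam G f) \<in> vrel G"
      by (simp add: vrel_iff)
    then have "rgam G f \<in> eflags {e}"
      using closed that \<open>C \<subseteq> eflags {e}\<close> by blast
    with f show ?thesis
      using fix_e by (simp add: vrel_Image_singleton)
  qed
  have "x \<in> C"
    using C by simp
  then have "(vrel (flag_conj m G))\<^sup>* `` {x} = C"
    using rtrancl_Image_local_cong[OF closed _ agree] C by (simp only:)
  then show "C \<in> {C \<in> eflags (redges G) // (vrel (flag_conj m G))\<^sup>*. C \<subseteq> eflags {e}}"
    using quotientI[OF x, of "(vrel (flag_conj m G))\<^sup>*"] \<open>C \<subseteq> eflags {e}\<close> by simp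
qed

lemma del_edge_flag_conj:
  assumes inv: "\<And>x. m (m x) = x" and fix_e: "\<And>f. f \<in> eflags {e} \<Longrightarrow> m f = f"
    and "e \<in> redges G"
  shows "del_edge e (flag_conj m G) = flag_conj m (del_edge e G)"
proof -
  have mem: "m x \<in> eflags {e} \<longleftrightarrow> x \<in> eflags {e}" for x
    using inv fix_e by metis
  have rgam: "rgam (del_edge e (flag_conj m G)) f = m (rgam (del_edge e G) (m f))" for f
    unfolding rgam_del_edge flag_conj_simps comp_apply
    by (rule first_exit_conj) (simp_all add: mem fix_e)
  have sub: "{C \<in> eflags (redges G') // (vrel G')\<^sup>*. C \<subseteq> eflags {e}}
    \<subseteq> {C \<in> eflags (redges G') // (vrel (flag_conj m G'))\<^sup>*. C \<subseteq> eflags {e}}"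
    if "e \<in> redges G'" for G'
    using edge_vertex_classes_flag_conj_subset[OF inv fix_e that] .
  have classes: "{C \<in> eflags (redges G) // (vrel (flag_conj m G))\<^sup>*. C \<subseteq> eflags {e}}
    = {C \<in> eflags (redges G) // (vrel G)\<^sup>*. C \<subseteq> eflags {e}}"
    using sub[of G] sub[of "flag_conj m G"] \<open>e \<in> redges G\<close>
    by (simp add: flag_conj_flag_conj[OF inv] subset_antisym)
  show ?thesis
  proof (rule rgraph.equality)
    show "rgam (del_edge e (flag_conj m G)) = rgam (flag_conj m (del_edge e G))"
      using rgam by (simp add: fun_eq_iff)
    show "riso (del_edge e (flag_conj m G)) = riso (flag_conj m (del_edge e G))"
      using classes by (simp add: del_edge_def)
  qed (simp_all add: del_edge_def flag_conj_def)
qed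

section \<open>Partial duals and partial Petrials\<close>

lemma dl_map_dl_map [simp]: "dl_map A (dl_map A x) = x"
  by (cases x) (simp add: dl_map_def)

lemma tw_map_tw_map [simp]: "tw_map A (tw_map A x) = x"
  by (cases x) (simp add: tw_map_def)

lemma fst_dl_map [simp]: "fst (dl_map A x) = fst x"
  by (cases x) (simp add: dl_map_def)

lemma fst_tw_map [simp]: "fst (tw_map A x) = fst x"
  by (cases x) (simp add: tw_map_def)

lemma dl_map_eflags: "e \<notin> A \<Longrightarrow> f \<in> eflags {e} \<Longrightarrow> dl_map A f = f"
  by (cases f) (auto simp: dl_map_def eflags_def)

lemma tw_map_eflags: "e \<notin> A \<Longrightarrow> f \<in> eflags {e} \<Longrightarrow> tw_map A f = f"
  by (cases f) (auto simp: tw_map_def eflags_def)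

lemma tw_map_fl_beta: "tw_map A (fl_beta x) = fl_beta (tw_map A x)"
  by (cases x) (simp add: tw_map_def fl_beta_def)

lemma dl_map_insert: "e \<notin> A \<Longrightarrow> dl_map (insert e A) = dl_map A \<circ> dl_map {e}"
  by (auto simp: dl_map_def fun_eq_iff)

lemma tw_map_insert: "e \<notin> A \<Longrightarrow> tw_map (insert e A) = tw_map A \<circ> tw_map {e}"
  by (auto simp: tw_map_def fun_eq_iff)

lemma dl_map_commute: "dl_map A (dl_map B x) = dl_map B (dl_map A x)"
  by (cases x) (simp add: dl_map_def)

lemma tw_map_commute: "tw_map A (tw_map B x) = tw_map B (tw_map A x)"
  by (cases x) (simp add: tw_map_def)

lemma dl_map_tw_map_commute: "A \<inter> B = {} \<Longrightarrow> dl_map A (tw_map B x) = tw_map B (dl_map A x)"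
  by (cases x) (auto simp: dl_map_def tw_map_def)

lemma pdual_eq_flag_conj: "pdual A G = flag_conj (dl_map A) G"
  by (simp add: pdual_def flag_conj_def)

lemma ppetrial_eq_flag_conj: "ppetrial A G = flag_conj (tw_map A) G"
  by (simp add: ppetrial_def flag_conj_def)

lemma redges_pdual [simp]: "redges (pdual A G) = redges G"
  by (simp add: pdual_def)

lemma redges_ppetrial [simp]: "redges (ppetrial A G) = redges G"
  by (simp add: ppetrial_def)

lemma ribbon_graph_pdual: "ribbon_graph G \<Longrightarrow> ribbon_graph (pdual A G)"
  unfolding pdual_eq_flag_conj by (rule ribbon_graph_flag_conj) auto

lemma ribbon_graph_ppetrial: "ribbon_graph G \<Longrightarrow> ribbon_graph (ppetrial A G)"
  unfolding ppetrial_eq_flag_conj by (rule ribbon_graph_flag_conj) auto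

lemma vcount_ppetrial: "vcount (ppetrial A G) = vcount G"
  unfolding ppetrial_eq_flag_conj by (rule vcount_flag_conj) (auto simp: tw_map_fl_beta)

lemma pdual_insert:
  assumes "e \<notin> A" shows "pdual (insert e A) G = pdual A (pdual {e} G)"
  unfolding pdual_eq_flag_conj flag_conj_comp[of "dl_map A" "dl_map {e}", OF dl_map_commute]
    dl_map_insert[OF assms] ..

lemma ppetrial_insert:
  assumes "e \<notin> A" shows "ppetrial (insert e A) G = ppetrial A (ppetrial {e} G)"
  unfolding ppetrial_eq_flag_conj flag_conj_comp[of "tw_map A" "tw_map {e}", OF tw_map_commute]
    tw_map_insert[OF assms] ..

lemma pdual_pdual_commute: "pdual A (pdual B G) = pdual B (pdual A G)"
  unfolding pdual_eq_flag_conj by (rule flag_conj_commute) (rule dl_map_commute)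

lemma ppetrial_ppetrial_commute: "ppetrial A (ppetrial B G) = ppetrial B (ppetrial A G)"
  unfolding ppetrial_eq_flag_conj by (rule flag_conj_commute) (rule tw_map_commute)

lemma pdual_ppetrial_commute:
  "A \<inter> B = {} \<Longrightarrow> pdual A (ppetrial B G) = ppetrial B (pdual A G)"
  unfolding pdual_eq_flag_conj ppetrial_eq_flag_conj
  by (rule flag_conj_commute) (rule dl_map_tw_map_commute)

lemma pdual_del_edge:
  "e \<notin> A \<Longrightarrow> e \<in> redges G \<Longrightarrow> pdual A (del_edge e G) = del_edge e (pdual A G)"
  unfolding pdual_eq_flag_conj by (rule del_edge_flag_conj[symmetric]) (auto simp: dl_map_eflags)

lemma ppetrial_del_edge:
  "e \<notin> A \<Longrightarrow> e \<in> redges G \<Longrightarrow> ppetrial A (del_edge e G) = del_edge e (ppetrial A G)"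
  unfolding ppetrial_eq_flag_conj by (rule del_edge_flag_conj[symmetric]) (auto simp: tw_map_eflags)

section \<open>Splitting the sums at an edge\<close>

lemma sum_Pow_insert:
  assumes "finite A" and "a \<notin> A"
  shows "(\<Sum>B \<in> Pow (insert a A). f B) = (\<Sum>B \<in> Pow A. f B) + (\<Sum>B \<in> Pow A. f (insert a B))"
proof -
  have "(\<Sum>B \<in> Pow (insert a A). f B) = (\<Sum>B \<in> Pow A. f B) + (\<Sum>B \<in> insert a ` Pow A. f B)"
    unfolding Pow_insert by (rule sum.union_disjoint) (use assms in auto)
  also have "(\<Sum>B \<in> insert a ` Pow A. f B) = (\<Sum>B \<in> Pow A. f (insert a B))"
    by (rule sum.reindex_cong[where l = "insert a"]) (use assms in \<open>auto simp: inj_on_def\<close>)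
  finally show ?thesis .
qed

lemma sum_PiE_insert:
  assumes "a \<notin> A" and "finite A"
  shows "(\<Sum>c \<in> insert a A \<rightarrow>\<^sub>E {..<n}. f c) = (\<Sum>y<n. \<Sum>c \<in> A \<rightarrow>\<^sub>E {..<n}. f (c(a := y)))"
proof -
  have "(\<Sum>c \<in> insert a A \<rightarrow>\<^sub>E {..<n}. f c)
      = (\<Sum>c \<in> (\<lambda>(y, g). g(a := y)) ` ({..<n} \<times> (A \<rightarrow>\<^sub>E {..<n})). f c)"
    by (simp add: PiE_insert_eq)
  also have "\<dots> = (\<Sum>(y, c) \<in> {..<n} \<times> (A \<rightarrow>\<^sub>E {..<n}). f (c(a := y)))"
    by (rule sum.reindex_cong[OF inj_combinator[OF assms(1)]]) auto
  also have "\<dots> = (\<Sum>y<n. \<Sum>c \<in> A \<rightarrow>\<^sub>E {..<n}. f (c(a := y)))"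
    by (simp add: sum.cartesian_product)
  finally show ?thesis .
qed

lemma blk_fun_upd:
  "e \<notin> E \<Longrightarrow> blk (insert e E) (c(e := y)) i = (if y = i then insert e (blk E c i) else blk E c i)"
  by (auto simp: blk_def)

lemma notin_blk: "e \<notin> E \<Longrightarrow> e \<notin> blk E c i"
  by (simp add: blk_def)

text \<open>Oriented so that the simplifier pushes every operation on the single edge \<open>e\<close> outwards;
  the hypothesis \<open>e \<notin> A\<close> keeps it from looping.\<close>

lemma edge_ops_outward:
  assumes "e \<notin> A"
  shows "pdual A (pdual {e} G) = pdual {e} (pdual A G)"
    and "ppetrial A (ppetrial {e} G) = ppetrial {e} (ppetrial A G)"
    and "pdual A (ppetrial {e} G) = ppetrial {e} (pdual A G)"
    and "ppetrial A (pdual {e} G) = pdual {e} (ppetrial A G)"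
  using assms
  by (simp_all add: pdual_pdual_commute ppetrial_ppetrial_commute pdual_ppetrial_commute)

lemma pdual_insert_blk:
  "e \<notin> E \<Longrightarrow> pdual (insert e (blk E c i)) G = pdual (blk E c i) (pdual {e} G)"
  by (rule pdual_insert) (rule notin_blk)

lemma ppetrial_insert_blk:
  "e \<notin> E \<Longrightarrow> ppetrial (insert e (blk E c i)) G = ppetrial (blk E c i) (ppetrial {e} G)"
  by (rule ppetrial_insert) (rule notin_blk)

lemmas edge_split_simps =
  edge_ops_outward blk_fun_upd notin_blk pdual_insert_blk ppetrial_insert_blk
  pdual_del_edge ppetrial_del_edge vcount_del_edge vcount_ppetrial ribbon_graph_pdual
  ribbon_graph_ppetrial op_td_def op_dt_def op_tdt_def contract_def

context
  fixes G :: "'e rgraph" and e :: 'e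
  assumes rg: "ribbon_graph G" and e: "e \<in> redges G"
begin

private definition E' :: "'e set" where "E' = redges G - {e}"

private lemma E': "redges G = insert e E'" "e \<notin> E'" "finite E'"
  using e rg by (auto simp: E'_def ribbon_graph_def)

private lemma notin_Pow: "A \<in> Pow E' \<Longrightarrow> e \<notin> A"
  using E' by blast

lemma P_d_deletion_contraction: "P_d G = P_d (del_edge e G) + P_d (contract e G)"
proof -
  have "P_d G = (\<Sum>A \<in> Pow E'. monom 1 (vcount (pdual A G)))
      + (\<Sum>A \<in> Pow E'. monom 1 (vcount (pdual (insert e A) G)))"
    unfolding P_d_def E'(1) by (rule sum_Pow_insert[OF E'(3,2)])
  also have "(\<Sum>A \<in> Pow E'. monom 1 (vcount (pdual A G))) = P_d (del_edge e G)"
    unfolding P_d_def redges_del_edge E'_def[symmetric]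
    by (rule sum.cong) (use rg e notin_Pow in \<open>simp_all add: edge_split_simps\<close>)
  also have "(\<Sum>A \<in> Pow E'. monom 1 (vcount (pdual (insert e A) G))) = P_d (contract e G)"
    unfolding P_d_def contract_def redges_del_edge redges_pdual E'_def[symmetric]
  proof (rule sum.cong)
    fix A assume "A \<in> Pow E'"
    then have "e \<notin> A" by (rule notin_Pow)
    with rg e show "monom 1 (vcount (pdual (insert e A) G))
      = monom 1 (vcount (pdual A (del_edge e (pdual {e} G))))"
      by (simp add: pdual_insert[OF \<open>e \<notin> A\<close>] edge_split_simps)
  qed simp
  finally show ?thesis .
qed

lemma P_tdt_deletion_contraction:
  "P_tdt G = P_tdt (del_edge e G) + P_tdt (contract e (ppetrial {e} G))"
proof -
  have "P_tdt G = (\<Sum>A \<in> Pow E'. monom 1 (vcount (op_tdt A G)))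
      + (\<Sum>A \<in> Pow E'. monom 1 (vcount (op_tdt (insert e A) G)))"
    unfolding P_tdt_def E'(1) by (rule sum_Pow_insert[OF E'(3,2)])
  also have "(\<Sum>A \<in> Pow E'. monom 1 (vcount (op_tdt A G))) = P_tdt (del_edge e G)"
    unfolding P_tdt_def redges_del_edge E'_def[symmetric]
    by (rule sum.cong) (use rg e notin_Pow in \<open>simp_all add: edge_split_simps\<close>)
  also have "(\<Sum>A \<in> Pow E'. monom 1 (vcount (op_tdt (insert e A) G)))
      = P_tdt (contract e (ppetrial {e} G))"
    unfolding P_tdt_def contract_def redges_del_edge redges_pdual redges_ppetrial E'_def[symmetric]
  proof (rule sum.cong)
    fix A assume "A \<in> Pow E'"
    then have "e \<notin> A" by (rule notin_Pow)
    with rg e show "monom 1 (vcount (op_tdt (insert e A) G))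
      = monom 1 (vcount (op_tdt A (del_edge e (pdual {e} (ppetrial {e} G)))))"
      by (simp add: pdual_insert[OF \<open>e \<notin> A\<close>] ppetrial_insert[OF \<open>e \<notin> A\<close>] edge_split_simps)
  qed simp
  finally show ?thesis .
qed

lemma P_dt_deletion_contraction:
  "P_dt G = P_dt (del_edge e G) + P_dt (contract e G) + P_dt (contract e (ppetrial {e} G))"
proof -
  let ?blk = "\<lambda>c i. blk (insert e E') c i"
  let ?S = "\<lambda>y. \<Sum>c \<in> E' \<rightarrow>\<^sub>E {..<3}. monom 1 (vcount
    (op_dt (?blk (c(e := y)) 2) (op_td (?blk (c(e := y)) 1) G))) :: int poly"
  have "P_dt G = (\<Sum>y<3. ?S y)"
    unfolding P_dt_def E'(1) by (rule sum_PiE_insert[OF E'(2,3)])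
  also have "\<dots> = ?S 0 + ?S 1 + ?S 2"
    by (simp add: eval_nat_numeral)
  also have "?S 0 = P_dt (del_edge e G)"
    unfolding P_dt_def redges_del_edge E'_def[symmetric]
    by (rule sum.cong) (use rg e E' in \<open>simp_all add: edge_split_simps\<close>)
  also have "?S 1 = P_dt (contract e G)"
    unfolding P_dt_def contract_def redges_del_edge redges_pdual E'_def[symmetric]
    by (rule sum.cong) (use rg e E' in \<open>simp_all add: edge_split_simps\<close>)
  also have "?S 2 = P_dt (contract e (ppetrial {e} G))"
    unfolding P_dt_def contract_def redges_del_edge redges_pdual redges_ppetrial E'_def[symmetric]
    by (rule sum.cong) (use rg e E' in \<open>simp_all add: edge_split_simps\<close>)
  finally show ?thesis .
qed

lemma P_all_deletion_contraction:
  "P_all G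
    = 2 * (P_all (del_edge e G) + P_all (contract e G) + P_all (contract e (ppetrial {e} G)))"
proof -
  let ?blk = "\<lambda>c i. blk (insert e E') c i"
  let ?S = "\<lambda>y. \<Sum>c \<in> E' \<rightarrow>\<^sub>E {..<6}. monom 1 (vcount
    (op_tdt (?blk (c(e := y)) 5) (op_dt (?blk (c(e := y)) 4) (op_td (?blk (c(e := y)) 3)
      (ppetrial (?blk (c(e := y)) 2) (pdual (?blk (c(e := y)) 1) G)))))) :: int poly"
  have "P_all G = (\<Sum>y<6. ?S y)"
    unfolding P_all_def E'(1) by (rule sum_PiE_insert[OF E'(2,3)])
  also have "\<dots> = ?S 0 + ?S 1 + ?S 2 + ?S 3 + ?S 4 + ?S 5"
    by (simp add: eval_nat_numeral)
  moreover have "?S 0 = P_all (del_edge e G)" and "?S 2 = P_all (del_edge e G)"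
    unfolding P_all_def redges_del_edge E'_def[symmetric]
    by (rule sum.cong; use rg e E' in \<open>simp add: edge_split_simps\<close>)+
  moreover have "?S 1 = P_all (contract e G)" and "?S 3 = P_all (contract e G)"
    unfolding P_all_def contract_def redges_del_edge redges_pdual E'_def[symmetric]
    by (rule sum.cong; use rg e E' in \<open>simp add: edge_split_simps\<close>)+
  moreover have "?S 4 = P_all (contract e (ppetrial {e} G))"
    and "?S 5 = P_all (contract e (ppetrial {e} G))"
    unfolding P_all_def contract_def redges_del_edge redges_pdual redges_ppetrial E'_def[symmetric]
    by (rule sum.cong; use rg e E' in \<open>simp add: edge_split_simps\<close>)+
  ultimately show ?thesis
    by (simp add: algebra_simps)
qed

end

theorem mainTheorem4:
  fixes G :: "'e rgraph" and e :: 'e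
  assumes "ribbon_graph G" and "e \<in> redges G"
  shows "P_d G = P_d (del_edge e G) + P_d (contract e G)
    \<and> P_tdt G = P_tdt (del_edge e G) + P_tdt (contract e (ppetrial {e} G))
    \<and> P_dt G = P_dt (del_edge e G) + P_dt (contract e G) + P_dt (contract e (ppetrial {e} G))
    \<and> P_all G = 2 * (P_all (del_edge e G) + P_all (contract e G)
                      + P_all (contract e (ppetrial {e} G)))"
  using P_d_deletion_contraction[OF assms] P_tdt_deletion_contraction[OF assms]
    P_dt_deletion_contraction[OF assms] P_all_deletion_contraction[OF assms] by blast

end
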